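(* Let $(G,\alpha)$ be an edge-labeled graph with $n$ vertices $v_1,\dots,v_n$ over $\mathbb{Z}/m\mathbb{Z}$ and let $1<i\le n$. Let $f=\big[\bigcup_{k=1}^{i-1}\{(p^{(i,k)})\}\big]$ be the least common multiple of the greatest common divisors of all $v_k$-trails of $v_i$, over $k=1,\dots,i-1$, and suppose $f\not\equiv 0\pmod m$. Then there exists an $i$-th flow-up class $\bar F^{(i)}=(\bar 0,\dots,\bar 0,\bar f^{(i)}_{v_i},\dots,\bar f^{(i)}_{v_n})\in\mathcal F_i$ (so $\bar f^{(i)}_{v_j}=\bar 0$ for all $j<i$) with $\bar f^{(i)}_{v_i}=f+m\mathbb{Z}$.
   Context: Let $m\ge 2$ and $G=(V,E)$ a finite simple connected graph with ordered vertices $v_1,\dots,v_n$. An edge-labeling $\alpha$ assigns to each edge a nonzero ideal of $\mathbb{Z}/m\mathbb{Z}$; each edge $e$ is labeled by the ideal $\alpha(e)=\langle l_e+m\mathbb{Z}\rangle$ generated by the class of a positive integer $l_e$, the integer representative (smallest positive integer of the coset) of the label. A spline on $(G,\alpha)$ is $F=(f_{v_1},\dots,f_{v_n})\in(\mathbb{Z}/m\mathbb{Z})^n$ with $f_{v_a}-f_{v_b}\in\alpha(v_av_b)$ for each edge $v_av_b$. An $i$-th flow-up class is a spline with $f_{v_i}\ne0$ and $f_{v_t}=0$ for $t<i$; $\mathcal F_i$ is the set of these. A trail is a sequence of vertices and edges, consecutive vertices joined by the listed edge, in which no edge is repeated; a $v_k$-trail of $v_i$ is a trail from $v_i$ to $v_k$.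 For such a trail $p^{(i,k)}$, $(p^{(i,k)})$ is the gcd (in $\mathbb{Z}$) of the integer representatives $l_e$ of its edges; $\{(p^{(i,k)})\}$ is the set of these over all $v_k$-trails of $v_i$; $[\,S\,]$ denotes the least common multiple of a finite set $S$ of integers. *)

theory Defs
  imports "HOL-Number_Theory.Cong"
begin

text \<open>Vertices are v_1..v_n, encoded as the natural numbers 1..n.
  The edge relation E is a symmetric irreflexive relation on {1..n};
  the label of edge {a,b} is given by its integer representative l a b
  (smallest positive element of the coset), so 0 < l a b < m.
  Elements of Z/mZ are represented by integers modulo m.\<close>

definition simple_graph :: "nat \<Rightarrow> (nat \<Rightarrow> nat \<Rightarrow> bool) \<Rightarrow> bool" where
  "simple_graph n E \<longleftrightarrow>
     (\<forall>a b. E a b \<longrightarrow> a \<in> {1..n} \<and> b \<in> {1..n}) \<and>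
     (\<forall>a b. E a b \<longrightarrow> E b a) \<and> (\<forall>a. \<not> E a a)"

definition connected_graph :: "nat \<Rightarrow> (nat \<Rightarrow> nat \<Rightarrow> bool) \<Rightarrow> bool" where
  "connected_graph n E \<longleftrightarrow> (\<forall>a\<in>{1..n}. \<forall>b\<in>{1..n}. E\<^sup>*\<^sup>* a b)"

definition edge_labeling :: "nat \<Rightarrow> (nat \<Rightarrow> nat \<Rightarrow> bool) \<Rightarrow> (nat \<Rightarrow> nat \<Rightarrow> nat) \<Rightarrow> bool" where
  "edge_labeling m E l \<longleftrightarrow> (\<forall>a b. E a b \<longrightarrow> l a b = l b a \<and> 0 < l a b \<and> l a b < m)"

definition is_spline :: "nat \<Rightarrow> nat \<Rightarrow> (nat \<Rightarrow> nat \<Rightarrow> bool) \<Rightarrow> (nat \<Rightarrow> nat \<Rightarrow> nat) \<Rightarrow> (nat \<Rightarrow> int) \<Rightarrow> bool" where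
  "is_spline m n E l F \<longleftrightarrow>
     (\<forall>a b. E a b \<longrightarrow> (\<exists>c::int. [F a - F b = c * int (l a b)] (mod int m)))"

definition flow_up_class :: "nat \<Rightarrow> nat \<Rightarrow> (nat \<Rightarrow> nat \<Rightarrow> bool) \<Rightarrow> (nat \<Rightarrow> nat \<Rightarrow> nat) \<Rightarrow> nat \<Rightarrow> (nat \<Rightarrow> int) \<Rightarrow> bool" where
  "flow_up_class m n E l i F \<longleftrightarrow>
     is_spline m n E l F \<and> \<not> [F i = 0] (mod int m) \<and>
     (\<forall>t\<in>{1..<i}. [F t = 0] (mod int m))"

text \<open>A trail is given by its vertex sequence; consecutive vertices are adjacent and
  no edge (unordered pair) is used twice.\<close>
definition trail_edges :: "nat list \<Rightarrow> (nat \<times> nat) list" where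
  "trail_edges vs = zip vs (tl vs)"

definition is_trail :: "nat \<Rightarrow> (nat \<Rightarrow> nat \<Rightarrow> bool) \<Rightarrow> nat list \<Rightarrow> nat \<Rightarrow> nat \<Rightarrow> bool" where
  "is_trail n E vs a b \<longleftrightarrow>
     vs \<noteq> [] \<and> hd vs = a \<and> last vs = b \<and> set vs \<subseteq> {1..n} \<and>
     (\<forall>(x,y)\<in>set (trail_edges vs). E x y) \<and>
     distinct (map (\<lambda>(x,y). {x,y}) (trail_edges vs))"

definition trail_gcd :: "(nat \<Rightarrow> nat \<Rightarrow> nat) \<Rightarrow> nat list \<Rightarrow> nat" where
  "trail_gcd l vs = Gcd ((\<lambda>(x,y). l x y) ` set (trail_edges vs))"

definition trail_gcds :: "nat \<Rightarrow> (nat \<Rightarrow> nat \<Rightarrow> bool) \<Rightarrow> (nat \<Rightarrow> nat \<Rightarrow> nat) \<Rightarrow> nat \<Rightarrow> nat \<Rightarrow> nat set" where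
  "trail_gcds n E l i k = {trail_gcd l vs | vs. is_trail n E vs i k}"

definition flow_lcm :: "nat \<Rightarrow> (nat \<Rightarrow> nat \<Rightarrow> bool) \<Rightarrow> (nat \<Rightarrow> nat \<Rightarrow> nat) \<Rightarrow> nat \<Rightarrow> nat" where
  "flow_lcm n E l i = Lcm (\<Union>k\<in>{1..<i}. trail_gcds n E l i k)"

end

theory Submission
  imports Defs "HOL-Computational_Algebra.Primes"
begin

text \<open>The values at v_i of the splines vanishing at v_1, ..., v_{i-1} form an ideal of
  the integers containing m, generated by some g > 0; it suffices to show that g divides f.
  Suppose a prime power p^a divides g but not f, and write m = p^s r with p not dividing r.
  Let S be the set of vertices reachable from v_i along edges whose labels are divisible
  by p^a. No v_k with k < i lies in S, since a path from v_i to v_k would be a trail whose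
  gcd, hence f, is divisible by p^a. For every edge leaving S, p^a does not divide its label
  l_e, so gcd(l_e, m) divides x = p^(a-1) r and x is a multiple of l_e modulo m. Hence the
  function equal to x on S and 0 elsewhere is a spline vanishing at v_1, ..., v_{i-1}, and its
  value x at v_i is not divisible by p^a, contradicting that g divides it.\<close>

lemma int_lincomb_closed_principal:
  fixes S :: "int set"
  assumes lincomb: "\<And>x y a b. x \<in> S \<Longrightarrow> y \<in> S \<Longrightarrow> a * x + b * y \<in> S"
    and "c \<in> S" "c \<noteq> 0"
  obtains g :: nat where "g > 0" "int g \<in> S" "\<And>x. x \<in> S \<Longrightarrow> int g dvd x"
proof -
  let ?P = "\<lambda>g :: nat. g > 0 \<and> int g \<in> S"
  define g where "g = (LEAST g. ?P g)"
  have "sgn c * c + 0 * c \<in> S" using assms(2) by (intro lincomb)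
  then have "\<bar>c\<bar> \<in> S" by (simp add: abs_sgn mult.commute)
  then have "?P (nat \<bar>c\<bar>)" using assms(3) by simp
  then have g: "?P g" unfolding g_def by (rule LeastI)
  have "int g dvd x" if x: "x \<in> S" for x
  proof (rule ccontr)
    define r where "r = x mod int g"
    assume "\<not> int g dvd x"
    then have "r \<noteq> 0" unfolding r_def by (simp add: dvd_eq_mod_eq_0)
    moreover have "0 \<le> r" "r < int g" using g unfolding r_def by simp_all
    moreover have "1 * x + (- (x div int g)) * int g \<in> S" using g by (intro lincomb x) simp
    then have "r \<in> S" unfolding r_def by (simp add: minus_div_mult_eq_mod [symmetric])
    ultimately have "?P (nat r)" by simp
    then have "g \<le> nat r" unfolding g_def by (rule Least_le)
    with \<open>0 \<le> r\<close> \<open>r < int g\<close> show False by (simp add: le_nat_iff)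
  qed
  with g that show ?thesis by blast
qed

lemma dvd_if_prime_powers_dvd:
  fixes g f :: nat
  assumes "g \<noteq> 0" "f \<noteq> 0" "\<And>p a. prime p \<Longrightarrow> p ^ a dvd g \<Longrightarrow> p ^ a dvd f"
  shows "g dvd f"
proof (rule multiplicity_le_imp_dvd[OF assms(1)])
  fix p :: nat assume p: "prime p"
  then have "p ^ multiplicity p g dvd f" by (intro assms(3) multiplicity_dvd)
  moreover have "\<not> is_unit p" using p by auto
  ultimately show "multiplicity p g \<le> multiplicity p f"
    using power_dvd_iff_le_multiplicity[OF assms(2)] by blast
qed

lemma gcd_dvd_prime_power_cofactor:
  fixes p a L m :: nat
  assumes "prime p" "m \<noteq> 0" "\<not> p ^ a dvd L"
  shows "gcd L m dvd p ^ (a - 1) * (m div p ^ multiplicity p m)"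
proof (rule multiplicity_le_imp_dvd)
  define r where "r = m div p ^ multiplicity p m"
  have p: "p \<noteq> 0" "\<not> is_unit p" using assms(1) by auto
  have r: "m = p ^ multiplicity p m * r"
    unfolding r_def by (simp add: multiplicity_dvd)
  with assms(2) have "r \<noteq> 0" by (metis mult_0_right)
  have L: "L \<noteq> 0" using assms(3) by (metis dvd_0_right)
  show "gcd L m \<noteq> 0" using assms(2) by simp
  fix q :: nat assume q: "prime q"
  show "multiplicity q (gcd L m) \<le> multiplicity q (p ^ (a - 1) * r)"
  proof (cases "q = p")
    case True
    have "multiplicity p (gcd L m) \<le> multiplicity p L"
      using L by (intro dvd_imp_multiplicity_le) auto
    also have "\<dots> \<le> a - 1"
      using power_dvd_iff_le_multiplicity[OF L p(2), of a] assms(3) by simp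
    also have "\<dots> \<le> multiplicity p (p ^ (a - 1) * r)"
      using p \<open>r \<noteq> 0\<close> by (simp add: prime_elem_multiplicity_mult_distrib assms(1))
    finally show ?thesis using True by simp
  next
    case False
    have "multiplicity q (gcd L m) \<le> multiplicity q m"
      using assms(2) by (intro dvd_imp_multiplicity_le) auto
    also have "\<dots> = multiplicity q r"
      by (subst r(1)) (simp add: prime_elem_multiplicity_mult_distrib q p \<open>r \<noteq> 0\<close>
          multiplicity_distinct_prime_power[OF q assms(1) False])
    also have "\<dots> = multiplicity q (p ^ (a - 1) * r)"
      by (simp add: prime_elem_multiplicity_mult_distrib q p \<open>r \<noteq> 0\<close>
          multiplicity_distinct_prime_power[OF q assms(1) False])
    finally show ?thesis .
  qed
qed

lemma prime_power_not_dvd_cofactor: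
  fixes p a m :: nat
  assumes "prime p" "m \<noteq> 0" "a \<noteq> 0"
  shows "\<not> p ^ a dvd p ^ (a - 1) * (m div p ^ multiplicity p m)"
proof
  assume "p ^ a dvd p ^ (a - 1) * (m div p ^ multiplicity p m)"
  moreover have "p ^ a = p ^ (a - 1) * p" using assms(3) by (simp add: power_eq_if)
  ultimately have "p dvd m div p ^ multiplicity p m"
    using assms(1) by (simp add: prime_gt_0_nat)
  moreover have "\<not> is_unit p" using assms(1) by auto
  ultimately show False
    using multiplicity_decompose[OF assms(2)] by simp
qed

lemma rtranclp_imp_distinct_path:
  assumes "R\<^sup>*\<^sup>* a b" "b \<in> V" "\<And>x y. R x y \<Longrightarrow> x \<in> V \<and> y \<in> V"
  shows "\<exists>vs. vs \<noteq> [] \<and> hd vs = a \<and> last vs = b \<and> set vs \<subseteq> V \<and> successively R vs \<and> distinct vs"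
  using assms(1)
proof (induction rule: converse_rtranclp_induct)
  case base
  then show ?case using assms(2) by (intro exI[of _ "[b]"]) auto
next
  case (step a c)
  then obtain vs where vs: "vs \<noteq> []" "hd vs = c" "last vs = b" "set vs \<subseteq> V"
    "successively R vs" "distinct vs"
    by blast
  show ?case
  proof (cases "a \<in> set vs")
    case True
    then obtain ys zs where "vs = ys @ a # zs" by (meson split_list)
    with vs show ?thesis
      by (intro exI[of _ "a # zs"]) (auto simp: successively_append_iff)
  next
    case False
    with vs step.hyps(1) assms(3) show ?thesis
      by (intro exI[of _ "a # vs"]) (auto simp: successively_Cons)
  qed
qed

lemma successively_imp_zip_tl: "successively R vs \<Longrightarrow> (x, y) \<in> set (zip vs (tl vs)) \<Longrightarrow> R x y"
  by (induction vs rule: induct_list012) auto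

lemma distinct_imp_distinct_edges: "distinct vs \<Longrightarrow> distinct (map (\<lambda>(x, y). {x, y}) (zip vs (tl vs)))"
proof (induction vs rule: induct_list012)
  case (3 x y zs)
  have "{x, y} \<noteq> {u, w}" if "(u, w) \<in> set (zip (y # zs) zs)" for u w
    using that "3.prems" by (auto simp: doubleton_eq_iff dest: set_zip_leftD set_zip_rightD)
  with 3 show ?case by auto
qed auto

lemma dvd_flow_lcm_if_rtranclp:
  assumes "simple_graph n E" "(\<lambda>a b. E a b \<and> d dvd l a b)\<^sup>*\<^sup>* i k" "k \<in> {1..<i}" "i \<le> n"
  shows "d dvd flow_lcm n E l i"
proof -
  have k: "k \<in> {1..n}" using assms(3,4) by auto
  have V: "\<And>x y. E x y \<and> d dvd l x y \<Longrightarrow> x \<in> {1..n} \<and> y \<in> {1..n}"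
    using assms(1) unfolding simple_graph_def by blast
  obtain vs where vs: "vs \<noteq> []" "hd vs = i" "last vs = k" "set vs \<subseteq> {1..n}"
    "successively (\<lambda>a b. E a b \<and> d dvd l a b) vs" "distinct vs"
    using rtranclp_imp_distinct_path[OF assms(2) k V] by blast
  have edges: "E x y \<and> d dvd l x y" if "(x, y) \<in> set (trail_edges vs)" for x y
    using successively_imp_zip_tl[OF vs(5)] that unfolding trail_edges_def by blast
  have "is_trail n E vs i k"
    unfolding is_trail_def using vs edges distinct_imp_distinct_edges[OF vs(6)]
    by (auto simp: trail_edges_def)
  with assms(3) have "trail_gcd l vs \<in> (\<Union>k\<in>{1..<i}. trail_gcds n E l i k)"
    unfolding trail_gcds_def by blast
  moreover have "d dvd trail_gcd l vs"
    unfolding trail_gcd_def using edges by (auto intro: Gcd_greatest)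
  ultimately show ?thesis
    unfolding flow_lcm_def by (meson dvd_Lcm dvd_trans)
qed

definition spline_vanishing_below ::
    "nat \<Rightarrow> nat \<Rightarrow> (nat \<Rightarrow> nat \<Rightarrow> bool) \<Rightarrow> (nat \<Rightarrow> nat \<Rightarrow> nat) \<Rightarrow> nat \<Rightarrow> (nat \<Rightarrow> int) \<Rightarrow> bool" where
  "spline_vanishing_below m n E l i F \<longleftrightarrow>
     is_spline m n E l F \<and> (\<forall>t\<in>{1..<i}. [F t = 0] (mod int m))"

lemma spline_vanishing_below_lincomb:
  assumes "spline_vanishing_below m n E l i F" "spline_vanishing_below m n E l i G"
  shows "spline_vanishing_below m n E l i (\<lambda>v. a * F v + b * G v)"
  unfolding spline_vanishing_below_def is_spline_def
proof (intro conjI allI impI ballI)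
  fix u w assume "E u w"
  with assms obtain c d where "[F u - F w = c * int (l u w)] (mod int m)"
    "[G u - G w = d * int (l u w)] (mod int m)"
    unfolding spline_vanishing_below_def is_spline_def by blast
  then have "[a * (F u - F w) + b * (G u - G w) = a * (c * int (l u w)) + b * (d * int (l u w))] (mod int m)"
    by (intro cong_add cong_scalar_left)
  then show "\<exists>e. [a * F u + b * G u - (a * F w + b * G w) = e * int (l u w)] (mod int m)"
    by (intro exI[of _ "a * c + b * d"]) (simp add: algebra_simps)
next
  fix t assume "t \<in> {1..<i}"
  with assms have "[a * F t + b * G t = a * 0 + b * 0] (mod int m)"
    unfolding spline_vanishing_below_def by (intro cong_add cong_scalar_left) auto
  then show "[a * F t + b * G t = 0] (mod int m)" by simp
qed

lemma spline_vanishing_below_modulus: "spline_vanishing_below m n E l i (\<lambda>_. int m)"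
  unfolding spline_vanishing_below_def is_spline_def by (auto intro: exI[of _ 0] simp: cong_iff_dvd_diff)

lemma indicator_is_spline:
  assumes "simple_graph n E" "edge_labeling m E l"
    and cross: "\<And>a b. E a b \<Longrightarrow> a \<in> S \<Longrightarrow> b \<notin> S \<Longrightarrow> \<exists>c. [x = c * int (l a b)] (mod int m)"
  shows "is_spline m n E l (\<lambda>v. if v \<in> S then x else 0)"
  unfolding is_spline_def
proof (intro allI impI)
  fix a b assume ab: "E a b"
  consider "a \<in> S \<longleftrightarrow> b \<in> S" | "a \<in> S" "b \<notin> S" | "b \<in> S" "a \<notin> S" by blast
  then show "\<exists>c. [(if a \<in> S then x else 0) - (if b \<in> S then x else 0) = c * int (l a b)] (mod int m)"
  proof cases
    case 1
    then show ?thesis by (intro exI[of _ 0]) auto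
  next
    case 2
    then show ?thesis using cross[OF ab] by simp
  next
    case 3
    have "E b a" "l b a = l a b"
      using ab assms(1,2) unfolding simple_graph_def edge_labeling_def by auto
    with 3 cross obtain c where "[x = c * int (l a b)] (mod int m)" by metis
    then have "[- x = (- c) * int (l a b)] (mod int m)" by (simp add: cong_minus_minus_iff)
    with 3 show ?thesis by (intro exI[of _ "- c"]) simp
  qed
qed

lemma spline_vanishing_below_not_prime_power_dvd:
  assumes "simple_graph n E" "edge_labeling m E l" "m \<noteq> 0" "i \<le> n"
    and "prime p" "\<not> p ^ a dvd flow_lcm n E l i"
  obtains F where "spline_vanishing_below m n E l i F" "\<not> int (p ^ a) dvd F i"
proof -
  define x where "x = p ^ (a - 1) * (m div p ^ multiplicity p m)"
  define S where "S = {v. (\<lambda>u w. E u w \<and> p ^ a dvd l u w)\<^sup>*\<^sup>* i v}"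
  have cross: "\<exists>c. [int x = c * int (l u w)] (mod int m)" if "E u w" "u \<in> S" "w \<notin> S" for u w
  proof -
    have "\<not> p ^ a dvd l u w"
      using that unfolding S_def by (auto intro: rtranclp.rtrancl_into_rtrancl)
    then have "gcd (l u w) m dvd x"
      unfolding x_def by (rule gcd_dvd_prime_power_cofactor[OF assms(5,3)])
    then have "gcd (int (l u w)) (int m) dvd int x" by simp
    then obtain c where "[int (l u w) * c = int x] (mod int m)"
      using cong_solve_dvd_int by blast
    then show ?thesis by (metis cong_sym mult.commute)
  qed
  have "t \<notin> S" if "t \<in> {1..<i}" for t
    using dvd_flow_lcm_if_rtranclp[OF assms(1) _ that assms(4)] assms(6) unfolding S_def by blast
  with cross have "spline_vanishing_below m n E l i (\<lambda>v. if v \<in> S then int x else 0)"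
    unfolding spline_vanishing_below_def using indicator_is_spline[OF assms(1,2)] by simp
  moreover have "a \<noteq> 0" using assms(6) by (metis one_dvd power_0)
  then have "\<not> p ^ a dvd x"
    unfolding x_def by (rule prime_power_not_dvd_cofactor[OF assms(5,3)])
  then have "\<not> int (p ^ a) dvd int x" by (metis int_dvd_int_iff)
  moreover have "i \<in> S" unfolding S_def by simp
  ultimately show ?thesis using that by auto
qed

lemma spline_vanishing_below_flow_lcm:
  assumes "simple_graph n E" "edge_labeling m E l" "m \<noteq> 0" "i \<le> n" "flow_lcm n E l i \<noteq> 0"
  obtains F where "spline_vanishing_below m n E l i F" "F i = int (flow_lcm n E l i)"
proof -
  let ?f = "flow_lcm n E l i"
  let ?V = "(\<lambda>F. F i) ` Collect (spline_vanishing_below m n E l i)"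
  obtain g where g: "g > 0" "int g \<in> ?V" "\<And>x. x \<in> ?V \<Longrightarrow> int g dvd x"
  proof (rule int_lincomb_closed_principal[of ?V "int m"])
    fix x y a b assume "x \<in> ?V" "y \<in> ?V"
    then obtain F G where "spline_vanishing_below m n E l i F" "x = F i"
      "spline_vanishing_below m n E l i G" "y = G i"
      by blast
    then show "a * x + b * y \<in> ?V"
      by (intro rev_image_eqI[of "\<lambda>v. a * F v + b * G v"]) (simp_all add: spline_vanishing_below_lincomb)
  next
    show "int m \<in> ?V"
      by (rule rev_image_eqI[of "\<lambda>_. int m"]) (simp_all add: spline_vanishing_below_modulus)
  qed (use assms(3) in auto)
  have "g dvd ?f"
  proof (rule dvd_if_prime_powers_dvd)
    fix p a :: nat assume "prime p" "p ^ a dvd g"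
    show "p ^ a dvd ?f"
    proof (rule ccontr)
      assume "\<not> p ^ a dvd ?f"
      then obtain F where F: "spline_vanishing_below m n E l i F" "\<not> int (p ^ a) dvd F i"
        by (rule spline_vanishing_below_not_prime_power_dvd[OF assms(1-4) \<open>prime p\<close>])
      have "int (p ^ a) dvd int g" using \<open>p ^ a dvd g\<close> by (simp only: int_dvd_int_iff)
      also have "int g dvd F i" by (intro g(3) imageI) (simp add: F(1))
      finally show False using F(2) by contradiction
    qed
  qed (use g(1) assms(5) in auto)
  then obtain q where q: "?f = g * q" by blast
  obtain G where G: "int g = G i" "G \<in> Collect (spline_vanishing_below m n E l i)"
    using g(2) by (rule imageE)
  then have G_spline: "spline_vanishing_below m n E l i G" by simp
  show ?thesis
  proof (rule that)
    show "spline_vanishing_below m n E l i (\<lambda>v. int q * G v + 0 * G v)"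
      using spline_vanishing_below_lincomb[OF G_spline G_spline] .
    show "int q * G i + 0 * G i = int ?f" using q G(1) by simp
  qed
qed

theorem mainTheorem3:
  fixes m n i :: nat and E :: "nat \<Rightarrow> nat \<Rightarrow> bool" and l :: "nat \<Rightarrow> nat \<Rightarrow> nat"
  assumes "m \<ge> 2"
    and "simple_graph n E" and "connected_graph n E"
    and "edge_labeling m E l"
    and "1 < i" and "i \<le> n"
    and "\<not> [int (flow_lcm n E l i) = 0] (mod int m)"
  shows "\<exists>F. flow_up_class m n E l i F \<and> [F i = int (flow_lcm n E l i)] (mod int m)"
proof -
  have "m \<noteq> 0" using assms(1) by simp
  moreover have "flow_lcm n E l i \<noteq> 0" using assms(7) by (rule contrapos_nn) simp
  ultimately obtain F where "spline_vanishing_below m n E l i F" "F i = int (flow_lcm n E l i)"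
    by (rule spline_vanishing_below_flow_lcm[OF assms(2,4) _ assms(6)])
  with assms(7) show ?thesis
    unfolding flow_up_class_def spline_vanishing_below_def by auto
qed

end
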